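(* Let $k$ be a field, $p \in k[t]$ a monic irreducible separable polynomial of degree $d$, $\alpha$ a root of $p$ in an algebraic closure of $k$, and $K = k(\alpha)$. Let $\lambda$ be a partition of $n$. Then the centralizer of $J_\lambda(C_p)$ in $M_{nd}(k)$ is isomorphic as a $k$-algebra to $K[x]_\lambda$.
   Context: $C_p$ is the $d\times d$ companion matrix of $p$, i.e. the matrix of multiplication by $\alpha$ on $K$ with respect to the $k$-basis $1,\alpha,\dots,\alpha^{d-1}$. For a $d\times d$ matrix $A$, $J_m(A)$ is the $md\times md$ block matrix with $A$ in each diagonal block, $I_d$ in each block directly below the diagonal, and $0$ elsewhere; $J_\lambda(A) = \bigoplus_i J_{\lambda_i}(A)$. For a field $K$ and partition $\lambda=(\lambda_1\ge\dots\ge\lambda_s)$, $K[x]_\lambda$ is the quotient $\mathcal{A}/\mathcal{I}$, where $\mathcal{A}$ is the algebra of $s\times s$ matrices over $K[x]$ whose $(i,j)$ entry lies in $x^{\max(0,\lambda_i-\lambda_j)}K[x]$, and $\mathcal{I}$ is the two-sided ideal of matrices whose entries in row $i$ all lie in $x^{\lambda_i}K[x]$. *)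

theory Defs
  imports "Jordan_Normal_Form.Matrix" "HOL-Algebra.QuotRing"
    "HOL-Computational_Algebra.Polynomial"
begin

text \<open>Companion matrix of a (monic) polynomial p of degree d: the matrix of
  multiplication by a root alpha w.r.t. the basis 1, alpha, ..., alpha^(d-1).\<close>
definition companion_mat :: "'a::comm_ring_1 poly \<Rightarrow> 'a mat" where
  "companion_mat p = mat (degree p) (degree p)
     (\<lambda>(i,j). if Suc j < degree p then (if i = Suc j then 1 else 0)
              else - coeff p i)"

definition jordan_block_mat :: "nat \<Rightarrow> 'a::zero_neq_one mat \<Rightarrow> 'a mat" where
  "jordan_block_mat m A = (let d = dim_row A in
     mat (m * d) (m * d) (\<lambda>(i,j).
       if i div d = j div d then A $$ (i mod d, j mod d)
       else if i div d = Suc (j div d) then (if i mod d = j mod d then 1 else 0)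
       else 0))"

fun jordan_mat :: "nat list \<Rightarrow> 'a::zero_neq_one mat \<Rightarrow> 'a mat" where
  "jordan_mat [] A = 0\<^sub>m 0 0"
| "jordan_mat (m # ms) A =
     four_block_mat (jordan_block_mat m A)
       (0\<^sub>m (m * dim_row A) (sum_list ms * dim_row A))
       (0\<^sub>m (sum_list ms * dim_row A) (m * dim_row A))
       (jordan_mat ms A)"

definition is_partition :: "nat list \<Rightarrow> nat \<Rightarrow> bool" where
  "is_partition lam n \<longleftrightarrow> sorted (rev lam) \<and> (\<forall>m\<in>set lam. 0 < m) \<and> sum_list lam = n"

definition separable_poly :: "'a::field poly \<Rightarrow> bool" where
  "separable_poly p \<longleftrightarrow> coprime p (pderiv p)"

definition centralizer_ring :: "'a::comm_ring_1 mat \<Rightarrow> 'a mat ring" where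
  "centralizer_ring J = \<lparr> carrier = {B \<in> carrier_mat (dim_row J) (dim_row J). B * J = J * B},
     monoid.mult = (*), one = 1\<^sub>m (dim_row J), zero = 0\<^sub>m (dim_row J) (dim_row J), add = (+) \<rparr>"

text \<open>The algebra \<A>: s x s matrices over K[x] whose (i,j) entry lies in
  x^(max 0 (lambda_i - lambda_j)) K[x].  (nat subtraction = max with 0.)\<close>
definition part_alg_carrier :: "nat list \<Rightarrow> 'b::field poly mat set" where
  "part_alg_carrier lam = {M \<in> carrier_mat (length lam) (length lam).
     \<forall>i < length lam. \<forall>j < length lam. monom 1 (lam ! i - lam ! j) dvd M $$ (i, j)}"

definition part_alg :: "nat list \<Rightarrow> 'b::field poly mat ring" where
  "part_alg lam = \<lparr> carrier = part_alg_carrier lam,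
     monoid.mult = (*), one = 1\<^sub>m (length lam), zero = 0\<^sub>m (length lam) (length lam),
     add = (+) \<rparr>"

definition part_ideal :: "nat list \<Rightarrow> 'b::field poly mat set" where
  "part_ideal lam = {M \<in> part_alg_carrier lam.
     \<forall>i < length lam. \<forall>j < length lam. monom 1 (lam ! i) dvd M $$ (i, j)}"

definition trunc_poly_alg :: "nat list \<Rightarrow> 'b::field poly mat set ring" where
  "trunc_poly_alg lam = part_alg lam Quot part_ideal lam"

end

theory Submission
  imports Defs "Jordan_Normal_Form.Char_Poly" "HOL-Algebra.Subrings"
begin

text \<open>Letting a matrix of \<open>\<A>\<close> act on \<open>\<Oplus>\<^sub>i K[x]/x\<^bsup>\<lambda>\<^sub>i\<^esup>\<close> gives a block
  Toeplitz matrix in \<open>M\<^sub>n(K)\<close>, and restricting scalars along the basis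
  \<open>1, \<alpha>, \<dots>, \<alpha>\<^bsup>d-1\<^esup>\<close> of \<open>K\<close> then gives a matrix in \<open>M\<^sub>n\<^sub>d(k)\<close>.
  The composite \<open>\<Phi>\<close> is a ring homomorphism with kernel \<open>\<I>\<close> sending
  \<open>(x + \<alpha>)\<cdot>1\<close> to \<open>J\<^sub>\<lambda>(C\<^sub>p)\<close>, so it maps into the centralizer.

  Conversely, let \<open>B\<close> commute with \<open>J\<^sub>\<lambda>(C\<^sub>p)\<close>. The \<open>z \<in> K[x]\<close> for which
  \<open>\<Phi>(z\<cdot>1)\<close> commutes with \<open>B\<close> form a subring containing \<open>k\<close> and \<open>x + \<alpha>\<close>.
  As \<open>p\<close> is separable, Newton's iteration inside this subring approximates the
  constant \<open>\<alpha>\<close> modulo \<open>x\<^sup>n\<close>, which suffices because \<open>x\<^sup>n\<cdot>1 \<in> \<I>\<close>. So \<open>B\<close>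
  commutes with \<open>\<Phi>(\<alpha>\<cdot>1)\<close> and \<open>\<Phi>(x\<cdot>1)\<close>. The first makes \<open>B\<close> \<open>K\<close>-linear,
  i.e. the restriction of scalars of some \<open>Y \<in> M\<^sub>n(K)\<close>; the second makes \<open>Y\<close>
  commute with \<open>J\<^sub>\<lambda>(0)\<close>, whose commutant consists of the block Toeplitz
  matrices.\<close>

hide_const (open) UnivPoly.monom UnivPoly.coeff

lemma index_mult_mat_sum:
  assumes "A \<in> carrier_mat nr n" "B \<in> carrier_mat n nc" "i < nr" "j < nc"
  shows "(A * B) $$ (i, j) = (\<Sum>k<n. A $$ (i, k) * B $$ (k, j))"
  using assms by (auto simp: scalar_prod_def atLeast0LessThan intro!: sum.cong)

lemma sum_lessThan_add_nat:
  fixes m n :: nat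
  shows "(\<Sum>k<m + n. f k) = (\<Sum>k<m. f k) + (\<Sum>k<n. f (m + k))"
  by (induction n) (simp_all add: add.assoc)

lemma sum_lessThan_mult:
  fixes m d :: nat
  shows "(\<Sum>w<m * d. f w) = (\<Sum>v<m. \<Sum>r<d. f (v * d + r))"
proof (induction m)
  case (Suc m)
  have "(\<Sum>w<Suc m * d. f w) = (\<Sum>w<m * d + d. f w)" by (simp add: add.commute)
  also have "\<dots> = (\<Sum>w<m * d. f w) + (\<Sum>r<d. f (m * d + r))" by (rule sum_lessThan_add_nat)
  finally show ?case using Suc by simp
qed simp

lemma sum_sum_delta:
  fixes g :: "nat \<Rightarrow> nat"
  assumes "j < n"
  shows "(\<Sum>i<n. \<Sum>l<g i. if i = j \<and> l = t then f i l else 0) = (if t < g j then f j t else 0)"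
proof -
  have "(\<Sum>i<n. \<Sum>l<g i. if i = j \<and> l = t then f i l else 0)
      = (\<Sum>i<n. if i = j then (\<Sum>l<g i. if l = t then f i l else 0) else 0)"
    by (intro sum.cong) auto
  with assms show ?thesis by simp
qed

lemma mult_add_less:
  fixes u r :: nat
  assumes "u < m" "r < d"
  shows "u * d + r < m * d"
proof -
  have "u * d + r < Suc u * d" using assms(2) by simp
  also have "\<dots> \<le> m * d" using assms(1) by (intro mult_le_mono1) simp
  finally show ?thesis .
qed

lemma less_mult_cases:
  fixes q :: nat
  assumes "q < m * d"
  obtains u r where "u < m" "r < d" "q = u * d + r"
proof
  show "q div d < m" using assms by (simp add: less_mult_imp_div_less)
  show "q mod d < d" using assms by (cases "d = 0") auto
qed simp

lemma mult_add_inject: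
  fixes r r' :: nat
  assumes "r < d" "r' < d"
  shows "u * d + r = u' * d + r' \<longleftrightarrow> u = u' \<and> r = r'"
proof
  assume eq: "u * d + r = u' * d + r'"
  have "u = (u * d + r) div d" "u' = (u' * d + r') div d" using assms by simp_all
  moreover have "r = (u * d + r) mod d" "r' = (u' * d + r') mod d" using assms by simp_all
  ultimately show "u = u' \<and> r = r'" using eq by metis
qed simp

lemma ring_mat_a_inv:
  assumes "B \<in> carrier_mat n n"
  shows "\<ominus>\<^bsub>ring_mat TYPE('c::comm_ring_1) n b\<^esub> B = - B"
  by (rule abelian_group.minus_equality[OF ring.is_abelian_group[OF ring_mat]])
     (use assms in \<open>auto simp: ring_mat_simps\<close>)

lemma ring_mat_subring_is_ring:
  assumes "C \<subseteq> carrier_mat n n" "1\<^sub>m n \<in> C"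
    and "\<And>A B. A \<in> C \<Longrightarrow> B \<in> C \<Longrightarrow> A + B \<in> C"
    and "\<And>A. A \<in> C \<Longrightarrow> - A \<in> C"
    and "\<And>A B. A \<in> C \<Longrightarrow> B \<in> C \<Longrightarrow> A * B \<in> C"
  shows "ring ((ring_mat TYPE('c::comm_ring_1) n b)\<lparr>carrier := C\<rparr>)"
proof (rule ring.subring_is_ring[OF ring_mat], rule ring.subringI[OF ring_mat])
  fix A assume "A \<in> C"
  with assms show "\<ominus>\<^bsub>ring_mat TYPE('c) n b\<^esub> A \<in> C" by (subst ring_mat_a_inv) auto
qed (use assms in \<open>auto simp: ring_mat_simps\<close>)

lemma commute_add_mat:
  assumes "A \<in> carrier_mat n n" "B \<in> carrier_mat n n" "J \<in> carrier_mat n n"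
    and "A * J = J * A" "B * J = J * B"
  shows "(A + B) * J = J * (A + B)"
  using assms by (simp add: add_mult_distrib_mat mult_add_distrib_mat)

lemma commute_mult_mat:
  assumes "A \<in> carrier_mat n n" "B \<in> carrier_mat n n" "J \<in> carrier_mat n n"
    and "A * J = J * A" "B * J = J * B"
  shows "A * B * J = J * (A * B)"
proof -
  have "A * B * J = A * (J * B)" using assms by (simp add: assoc_mult_mat)
  also have "\<dots> = J * (A * B)" using assms by (simp flip: assoc_mult_mat)
  finally show ?thesis .
qed

lemma ring_centralizer_ring:
  fixes J :: "'c::comm_ring_1 mat"
  assumes J: "J \<in> carrier_mat n n"
  shows "ring (centralizer_ring J)"
proof -
  have "centralizer_ring J =
      (ring_mat TYPE('c) n ())\<lparr>carrier := {B \<in> carrier_mat n n. B * J = J * B}\<rparr>"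
    using J by (simp add: centralizer_ring_def ring_mat_def)
  also have "ring \<dots>"
  proof (rule ring_mat_subring_is_ring)
    fix A B assume "A \<in> {B \<in> carrier_mat n n. B * J = J * B}" "B \<in> {B \<in> carrier_mat n n. B * J = J * B}"
    with J show "A + B \<in> {B \<in> carrier_mat n n. B * J = J * B}" "A * B \<in> {B \<in> carrier_mat n n. B * J = J * B}"
      by (auto intro: commute_add_mat commute_mult_mat)
  qed (use J in auto)
  finally show ?thesis .
qed

lemma smult_one_mat_commute:
  fixes B :: "'c::comm_ring_1 mat"
  assumes B: "B \<in> carrier_mat m m"
  shows "(c \<cdot>\<^sub>m 1\<^sub>m m) * B = B * (c \<cdot>\<^sub>m 1\<^sub>m m)"
  using mult_smult_assoc_mat[OF one_carrier_mat B, of c] mult_smult_distrib[OF B one_carrier_mat, of c] B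
  by simp

lemma monom_1_dvd_monom_1: "a \<le> b \<Longrightarrow> monom (1::'c::comm_semiring_1) a dvd monom 1 b"
  by (metis le_add_diff_inverse dvd_triv_left mult_monom mult_1)

text \<open>An index \<open>u < sum_list lam\<close> stands for the pair \<open>(i, l)\<close> with \<open>l < lam ! i\<close>,
  pairs being ordered lexicographically.\<close>

definition part_pos :: "nat list \<Rightarrow> nat \<Rightarrow> nat \<Rightarrow> nat" where
  "part_pos lam i l = sum_list (take i lam) + l"

fun part_idx :: "nat list \<Rightarrow> nat \<Rightarrow> nat \<times> nat" where
  "part_idx [] u = (0, u)"
| "part_idx (m # ms) u = (if u < m then (0, u) else apfst Suc (part_idx ms (u - m)))"

lemma part_pos_Cons_0 [simp]: "part_pos (m # ms) 0 l = l"
  and part_pos_Cons_Suc [simp]: "part_pos (m # ms) (Suc i) l = m + part_pos ms i l"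
  by (simp_all add: part_pos_def)

lemma part_pos_less_part_idx:
  assumes "i < length lam" "l < lam ! i"
  shows "part_pos lam i l < sum_list lam \<and> part_idx lam (part_pos lam i l) = (i, l)"
  using assms
proof (induction lam arbitrary: i)
  case (Cons m ms)
  then show ?case by (cases i) auto
qed simp

lemma part_pos_less: "i < length lam \<Longrightarrow> l < lam ! i \<Longrightarrow> part_pos lam i l < sum_list lam"
  and part_idx_part_pos: "i < length lam \<Longrightarrow> l < lam ! i \<Longrightarrow> part_idx lam (part_pos lam i l) = (i, l)"
  using part_pos_less_part_idx by blast+

lemma part_pos_inject:
  assumes "i < length lam" "l < lam ! i" "j < length lam" "l' < lam ! j"
  shows "part_pos lam i l = part_pos lam j l' \<longleftrightarrow> i = j \<and> l = l'"
proof
  assume "part_pos lam i l = part_pos lam j l'"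
  then have "part_idx lam (part_pos lam i l) = part_idx lam (part_pos lam j l')" by simp
  with assms show "i = j \<and> l = l'" by (simp add: part_idx_part_pos)
qed simp

lemma part_pos_cases:
  assumes "u < sum_list lam"
  obtains i l where "i < length lam" "l < lam ! i" "u = part_pos lam i l"
  using assms
proof (induction lam arbitrary: u thesis)
  case (Cons m ms)
  show ?case
  proof (cases "u < m")
    case False
    with Cons.prems(2) obtain i l where "i < length ms" "l < ms ! i" "u - m = part_pos ms i l"
      by (elim Cons.IH) auto
    with False show ?thesis by (intro Cons.prems(1)[of "Suc i" l]) auto
  qed (use Cons.prems(1)[of 0 u] in simp)
qed simp

lemma sum_part_pos:
  "(\<Sum>u<sum_list lam. f u) = (\<Sum>i<length lam. \<Sum>l<lam ! i. f (part_pos lam i l))"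
proof (induction lam arbitrary: f)
  case (Cons m ms)
  then show ?case
    by (simp add: sum_lessThan_add_nat sum.lessThan_Suc_shift del: sum.lessThan_Suc)
qed simp

lemma jordan_block_mat_carrier: "jordan_block_mat m A \<in> carrier_mat (m * dim_row A) (m * dim_row A)"
  unfolding jordan_block_mat_def Let_def by auto

lemma jordan_mat_carrier: "jordan_mat lam A \<in> carrier_mat (sum_list lam * dim_row A) (sum_list lam * dim_row A)"
  by (induction lam) (auto simp: distrib_right intro: four_block_carrier_mat jordan_block_mat_carrier)

lemma index_jordan_block_mat:
  assumes "A \<in> carrier_mat d d" "l < m" "l' < m" "r < d" "r' < d"
  shows "jordan_block_mat m A $$ (l * d + r, l' * d + r') =
    (if l = l' then A $$ (r, r') else if l = Suc l' \<and> r = r' then 1 else 0)"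
proof -
  have A: "dim_row A = d" using assms(1) by simp
  have "jordan_block_mat m A $$ (l * d + r, l' * d + r') =
    (if l = l' then A $$ (r, r') else if l = Suc l' then (if r = r' then 1 else 0) else 0)"
    using assms(2-) mult_add_less[of l m r d] mult_add_less[of l' m r' d]
    by (simp add: jordan_block_mat_def A mult_add_inject del: mult_Suc)
  then show ?thesis by auto
qed

lemma index_jordan_mat:
  assumes A: "A \<in> carrier_mat d d"
    and "i < length lam" "l < lam ! i" "r < d" "j < length lam" "l' < lam ! j" "r' < d"
  shows "jordan_mat lam A $$ (part_pos lam i l * d + r, part_pos lam j l' * d + r') =
    (if i = j \<and> l = l' then A $$ (r, r') else if i = j \<and> l = Suc l' \<and> r = r' then 1 else 0)"
  using assms(2-)
proof (induction lam arbitrary: i j)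
  case (Cons m ms)
  have dims: "dim_row A = d" "dim_row (jordan_block_mat m A) = m * d" "dim_col (jordan_block_mat m A) = m * d"
    "dim_row (jordan_mat ms A) = sum_list ms * d" "dim_col (jordan_mat ms A) = sum_list ms * d"
    using jordan_block_mat_carrier[of m A] jordan_mat_carrier[of ms A] A by auto
  have shift: "(m + x) * d + s = m * d + (x * d + s)" for x s by (simp add: algebra_simps)
  have less: "part_pos ms i l * d + r < sum_list ms * d" if "i < length ms" "l < ms ! i" "r < d" for i l r
    using that by (intro mult_add_less part_pos_less)
  have block: "l * d + r < m * d" if "l < m" "r < d" for l r
    using that by (rule mult_add_less)
  show ?case
  proof (cases i; cases j)
    fix i' j' assume ij: "i = Suc i'" "j = Suc j'"
    with Cons.prems have "i' < length ms" "l < ms ! i'" "j' < length ms" "l' < ms ! j'" by auto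
    with Cons.prems ij show ?thesis
      using Cons.IH[of i' j'] less[of i' l r] less[of j' l' r'] by (simp add: dims shift)
  qed (use Cons.prems block[of l r] block[of l' r'] less in
        \<open>auto simp: dims shift index_jordan_block_mat[OF A]\<close>)
qed simp

section \<open>The algebra \<open>K[x]\<^sub>\<lambda>\<close> as block Toeplitz matrices\<close>

lemma part_alg_carrierD:
  assumes "M \<in> part_alg_carrier lam"
  shows "M \<in> carrier_mat (length lam) (length lam)"
    and "i < length lam \<Longrightarrow> j < length lam \<Longrightarrow> monom 1 (lam ! i - lam ! j) dvd M $$ (i, j)"
  using assms unfolding part_alg_carrier_def by auto

lemma smult_one_mat_in_part_alg_carrier: "z \<cdot>\<^sub>m 1\<^sub>m (length lam) \<in> part_alg_carrier lam"
  unfolding part_alg_carrier_def by auto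

lemma part_alg_mult_closed:
  assumes M: "M \<in> part_alg_carrier lam" and M': "M' \<in> part_alg_carrier lam"
  shows "M * M' \<in> part_alg_carrier lam"
proof -
  let ?s = "length lam"
  have Mc: "M \<in> carrier_mat ?s ?s" "M' \<in> carrier_mat ?s ?s" using M M' by (auto dest: part_alg_carrierD)
  have "monom 1 (lam ! i - lam ! j) dvd M $$ (i, k) * M' $$ (k, j)"
    if "i < ?s" "j < ?s" "k < ?s" for i j k
  proof -
    have "monom 1 (lam ! i - lam ! j) dvd monom 1 ((lam ! i - lam ! k) + (lam ! k - lam ! j))"
      by (rule monom_1_dvd_monom_1) linarith
    also have "\<dots> = monom 1 (lam ! i - lam ! k) * monom 1 (lam ! k - lam ! j)"
      by (simp add: mult_monom)
    also have "\<dots> dvd M $$ (i, k) * M' $$ (k, j)"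
      using that by (intro mult_dvd_mono part_alg_carrierD(2)[OF M] part_alg_carrierD(2)[OF M'])
    finally show ?thesis .
  qed
  then show ?thesis
    using Mc by (auto simp: part_alg_carrier_def index_mult_mat_sum[OF Mc] simp del: index_mult_mat
        intro!: dvd_sum)
qed

lemma part_alg_eq_ring_mat:
  "part_alg lam = (ring_mat TYPE('b::field poly) (length lam) ())\<lparr>carrier := part_alg_carrier lam\<rparr>"
  unfolding part_alg_def ring_mat_def by simp

lemma ring_part_alg: "ring (part_alg lam :: 'b::field poly mat ring)"
  unfolding part_alg_eq_ring_mat
proof (rule ring_mat_subring_is_ring)
  show "A * B \<in> part_alg_carrier lam" if "A \<in> part_alg_carrier lam" "B \<in> part_alg_carrier lam" for A B
    using that by (rule part_alg_mult_closed)
qed (auto simp: part_alg_carrier_def)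

text \<open>Block \<open>(i, j)\<close> of \<open>toeplitz_mat lam M\<close> is the matrix of multiplication
  by \<open>M\<^sub>i\<^sub>j\<close> from \<open>K[x]/x\<^bsup>\<lambda>\<^sub>j\<^esup>\<close> to \<open>K[x]/x\<^bsup>\<lambda>\<^sub>i\<^esup>\<close>
  in the monomial bases.\<close>

definition toeplitz_mat :: "nat list \<Rightarrow> 'b::zero poly mat \<Rightarrow> 'b mat" where
  "toeplitz_mat lam M = mat (sum_list lam) (sum_list lam) (\<lambda>(u, u').
     case (part_idx lam u, part_idx lam u') of ((i, l), (j, l')) \<Rightarrow>
       if l' \<le> l then coeff (M $$ (i, j)) (l - l') else 0)"

lemma toeplitz_mat_carrier [simp]: "toeplitz_mat lam M \<in> carrier_mat (sum_list lam) (sum_list lam)"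
  unfolding toeplitz_mat_def by simp

lemma toeplitz_mat_dims [simp]:
  "dim_row (toeplitz_mat lam M) = sum_list lam" "dim_col (toeplitz_mat lam M) = sum_list lam"
  unfolding toeplitz_mat_def by simp_all

lemma index_toeplitz_mat:
  assumes "i < length lam" "l < lam ! i" "j < length lam" "l' < lam ! j"
  shows "toeplitz_mat lam M $$ (part_pos lam i l, part_pos lam j l') =
    (if l' \<le> l then coeff (M $$ (i, j)) (l - l') else 0)"
  using assms by (simp add: toeplitz_mat_def part_pos_less part_idx_part_pos)

lemma index_toeplitz_mat_smult_one:
  assumes "i < length lam" "l < lam ! i" "j < length lam" "l' < lam ! j"
  shows "toeplitz_mat lam (z \<cdot>\<^sub>m 1\<^sub>m (length lam)) $$ (part_pos lam i l, part_pos lam j l') =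
    (if i = j \<and> l' \<le> l then coeff z (l - l') else 0)"
  using assms by (simp add: index_toeplitz_mat)

lemma eq_mat_part_posI:
  assumes "A \<in> carrier_mat (sum_list lam) (sum_list lam)" "B \<in> carrier_mat (sum_list lam) (sum_list lam)"
    and "\<And>i l j l'. i < length lam \<Longrightarrow> l < lam ! i \<Longrightarrow>
      j < length lam \<Longrightarrow> l' < lam ! j \<Longrightarrow>
      A $$ (part_pos lam i l, part_pos lam j l') = B $$ (part_pos lam i l, part_pos lam j l')"
  shows "A = B"
proof (rule eq_matI)
  fix u u' assume "u < dim_row B" "u' < dim_col B"
  with assms(2) have "u < sum_list lam" "u' < sum_list lam" by auto
  then show "A $$ (u, u') = B $$ (u, u')"
    by (elim part_pos_cases) (simp add: assms(3))
qed (use assms in auto)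

lemma eq_mat_part_pos_blockI:
  assumes "A \<in> carrier_mat (sum_list lam * d) (sum_list lam * d)" "B \<in> carrier_mat (sum_list lam * d) (sum_list lam * d)"
    and "\<And>i l r j l' r'. i < length lam \<Longrightarrow> l < lam ! i \<Longrightarrow> r < d \<Longrightarrow>
      j < length lam \<Longrightarrow> l' < lam ! j \<Longrightarrow> r' < d \<Longrightarrow>
      A $$ (part_pos lam i l * d + r, part_pos lam j l' * d + r') =
      B $$ (part_pos lam i l * d + r, part_pos lam j l' * d + r')"
  shows "A = B"
proof (rule eq_matI)
  fix q q' assume "q < dim_row B" "q' < dim_col B"
  with assms(2) have "q < sum_list lam * d" "q' < sum_list lam * d" by auto
  then show "A $$ (q, q') = B $$ (q, q')"
    by (elim less_mult_cases part_pos_cases) (simp add: assms(3))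
qed (use assms in auto)

text \<open>Multiplying truncations loses nothing when the left factor is divisible by
  \<open>x\<^bsup>\<lambda>\<^sub>i - \<lambda>\<^sub>k\<^esup>\<close>: this is where the defining condition of \<open>\<A>\<close> enters.\<close>

lemma coeff_mult_truncated:
  fixes a b :: "'c::comm_semiring_1 poly"
  assumes dvd: "monom 1 (Li - Lk) dvd a" and "l < Li"
  shows "(if l' \<le> l then coeff (a * b) (l - l') else 0)
    = (\<Sum>m<Lk. if m \<le> l \<and> l' \<le> m then coeff a (l - m) * coeff b (m - l') else 0)"
    (is "_ = sum ?g _")
proof (cases "l' \<le> l")
  case True
  have "coeff (a * b) (l - l') = (\<Sum>m\<in>{l'..l}. coeff a (l - m) * coeff b (m - l'))"
    unfolding coeff_mult
    by (rule sum.reindex_bij_witness[where i = "\<lambda>m. l - m" and j = "\<lambda>x. l - x"])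
       (use True in \<open>auto simp: add.commute\<close>)
  also have "\<dots> = sum ?g {..l}"
    by (rule sum.mono_neutral_cong_left) auto
  also have "\<dots> = sum ?g {..<Lk}"
  proof (rule sum.mono_neutral_cong)
    show "?g m = 0" if "m \<in> {..l} - {..<Lk}" for m
    proof -
      from that \<open>l < Li\<close> have "l - m < Li - Lk" by auto
      with dvd show ?thesis by (simp add: monom_1_dvd_iff')
    qed
  qed auto
  finally show ?thesis using True by simp
next
  case False
  have "sum ?g {..<Lk} = 0" by (rule sum.neutral) (use False in auto)
  with False show ?thesis by simp
qed

lemma toeplitz_mat_mult:
  assumes M: "M \<in> part_alg_carrier lam" and M': "M' \<in> part_alg_carrier lam"
  shows "toeplitz_mat lam (M * M') = toeplitz_mat lam M * toeplitz_mat lam M'"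
proof (rule eq_mat_part_posI)
  fix i l j l' assume i: "i < length lam" "l < lam ! i" and j: "j < length lam" "l' < lam ! j"
  let ?s = "length lam" and ?T = "toeplitz_mat lam"
  have Mc: "M \<in> carrier_mat ?s ?s" "M' \<in> carrier_mat ?s ?s" using M M' by (auto dest: part_alg_carrierD)
  have "?T (M * M') $$ (part_pos lam i l, part_pos lam j l')
      = (\<Sum>k<?s. if l' \<le> l then coeff (M $$ (i, k) * M' $$ (k, j)) (l - l') else 0)"
    using i j Mc by (simp add: index_toeplitz_mat index_mult_mat_sum[OF Mc] coeff_sum del: index_mult_mat)
  also have "\<dots> = (\<Sum>k<?s. \<Sum>m<lam ! k.
      ?T M $$ (part_pos lam i l, part_pos lam k m) * ?T M' $$ (part_pos lam k m, part_pos lam j l'))"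
  proof (rule sum.cong[OF refl])
    fix k assume "k \<in> {..<?s}"
    with i j show "(if l' \<le> l then coeff (M $$ (i, k) * M' $$ (k, j)) (l - l') else 0) = (\<Sum>m<lam ! k.
      ?T M $$ (part_pos lam i l, part_pos lam k m) * ?T M' $$ (part_pos lam k m, part_pos lam j l'))"
      by (subst coeff_mult_truncated[OF part_alg_carrierD(2)[OF M]])
         (auto simp: index_toeplitz_mat intro!: sum.cong)
  qed
  also have "\<dots> = (?T M * ?T M') $$ (part_pos lam i l, part_pos lam j l')"
    using i j by (simp add: index_mult_mat_sum[OF toeplitz_mat_carrier toeplitz_mat_carrier]
        part_pos_less sum_part_pos del: index_mult_mat)
  finally show "?T (M * M') $$ (part_pos lam i l, part_pos lam j l') =
    (?T M * ?T M') $$ (part_pos lam i l, part_pos lam j l')" .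
qed auto

lemma toeplitz_mat_add:
  assumes "M \<in> carrier_mat (length lam) (length lam)" "M' \<in> carrier_mat (length lam) (length lam)"
  shows "toeplitz_mat lam (M + M') = toeplitz_mat lam M + toeplitz_mat lam M'"
  by (rule eq_mat_part_posI[where lam = lam]) (use assms in \<open>auto simp: index_toeplitz_mat part_pos_less\<close>)

lemma toeplitz_mat_const: "toeplitz_mat lam ([:c:] \<cdot>\<^sub>m 1\<^sub>m (length lam)) = c \<cdot>\<^sub>m 1\<^sub>m (sum_list lam)"
  by (rule eq_mat_part_posI)
     (auto simp: index_toeplitz_mat_smult_one part_pos_less part_pos_inject coeff_pCons split: nat.split)

lemma toeplitz_mat_one: "toeplitz_mat lam (1\<^sub>m (length lam)) = 1\<^sub>m (sum_list lam)"
  by (rule eq_mat_part_posI[where lam = lam])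
     (auto simp: index_toeplitz_mat part_pos_less part_pos_inject coeff_1)

lemma toeplitz_mat_eq_0_iff:
  assumes pos: "\<forall>m\<in>set lam. 0 < m" and M: "M \<in> carrier_mat (length lam) (length lam)"
  shows "toeplitz_mat lam M = 0\<^sub>m (sum_list lam) (sum_list lam) \<longleftrightarrow>
    (\<forall>i<length lam. \<forall>j<length lam. monom 1 (lam ! i) dvd M $$ (i, j))"
proof
  assume 0: "toeplitz_mat lam M = 0\<^sub>m (sum_list lam) (sum_list lam)"
  show "\<forall>i<length lam. \<forall>j<length lam. monom 1 (lam ! i) dvd M $$ (i, j)"
  proof (intro allI impI)
    fix i j assume ij: "i < length lam" "j < length lam"
    with pos have "0 < lam ! j" by simp
    with 0 ij show "monom 1 (lam ! i) dvd M $$ (i, j)"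
      using index_toeplitz_mat[of i lam _ j 0 M] by (auto simp: monom_1_dvd_iff' part_pos_less)
  qed
next
  assume "\<forall>i<length lam. \<forall>j<length lam. monom 1 (lam ! i) dvd M $$ (i, j)"
  then show "toeplitz_mat lam M = 0\<^sub>m (sum_list lam) (sum_list lam)"
    by (intro eq_mat_part_posI) (auto simp: index_toeplitz_mat part_pos_less monom_1_dvd_iff')
qed

definition nil_jordan_mat :: "nat list \<Rightarrow> 'b::comm_ring_1 mat" where
  "nil_jordan_mat lam = toeplitz_mat lam ([:0, 1:] \<cdot>\<^sub>m 1\<^sub>m (length lam))"

lemma nil_jordan_mat_carrier [simp]: "nil_jordan_mat lam \<in> carrier_mat (sum_list lam) (sum_list lam)"
  unfolding nil_jordan_mat_def by simp

lemma index_nil_jordan_mat: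
  assumes "i < length lam" "l < lam ! i" "j < length lam" "l' < lam ! j"
  shows "nil_jordan_mat lam $$ (part_pos lam i l, part_pos lam j l') = (if i = j \<and> l = Suc l' then 1 else 0)"
  using assms by (auto simp: nil_jordan_mat_def index_toeplitz_mat_smult_one coeff_pCons split: nat.split)

lemma mult_nil_jordan_mat_index:
  assumes Y: "Y \<in> carrier_mat (sum_list lam) (sum_list lam)" and u: "u < sum_list lam"
    and j: "j < length lam" "t < lam ! j"
  shows "(Y * nil_jordan_mat lam) $$ (u, part_pos lam j t) =
    (if Suc t < lam ! j then Y $$ (u, part_pos lam j (Suc t)) else 0)"
proof -
  have "(Y * nil_jordan_mat lam) $$ (u, part_pos lam j t) =
      (\<Sum>w<sum_list lam. Y $$ (u, w) * nil_jordan_mat lam $$ (w, part_pos lam j t))"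
    using j by (intro index_mult_mat_sum[OF Y nil_jordan_mat_carrier u] part_pos_less)
  also have "\<dots> = (\<Sum>i<length lam. \<Sum>l<lam ! i. if i = j \<and> l = Suc t then Y $$ (u, part_pos lam i l) else 0)"
    unfolding sum_part_pos using j by (intro sum.cong refl) (simp add: index_nil_jordan_mat)
  finally show ?thesis using j by (simp add: sum_sum_delta)
qed

lemma nil_jordan_mat_mult_index:
  assumes Y: "Y \<in> carrier_mat (sum_list lam) (sum_list lam)" and c: "c < sum_list lam"
    and i: "i < length lam" "l < lam ! i"
  shows "(nil_jordan_mat lam * Y) $$ (part_pos lam i l, c) =
    (if 0 < l then Y $$ (part_pos lam i (l - 1), c) else 0)"
proof -
  have "(nil_jordan_mat lam * Y) $$ (part_pos lam i l, c) =
      (\<Sum>w<sum_list lam. nil_jordan_mat lam $$ (part_pos lam i l, w) * Y $$ (w, c))"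
    using i by (intro index_mult_mat_sum[OF nil_jordan_mat_carrier Y _ c] part_pos_less)
  also have "\<dots> = (\<Sum>j<length lam. \<Sum>l'<lam ! j.
      if j = i \<and> l' = l - 1 \<and> 0 < l then Y $$ (part_pos lam j l', c) else 0)"
    unfolding sum_part_pos using i by (intro sum.cong refl) (auto simp: index_nil_jordan_mat)
  finally show ?thesis using i by (cases l) (simp_all add: sum_sum_delta)
qed

context
  fixes lam :: "nat list" and Y :: "'b::field mat"
  assumes Y: "Y \<in> carrier_mat (sum_list lam) (sum_list lam)"
    and commute: "Y * nil_jordan_mat lam = nil_jordan_mat lam * Y"
begin

lemma nil_jordan_commute_index:
  assumes i: "i < length lam" "l < lam ! i" and j: "j < length lam" "t < lam ! j"
  shows "Y $$ (part_pos lam i l, part_pos lam j t) =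
    (if t \<le> l then Y $$ (part_pos lam i (l - t), part_pos lam j 0) else 0)"
  using i j(2)
proof (induction t arbitrary: l)
  case (Suc t)
  have "Y $$ (part_pos lam i l, part_pos lam j (Suc t)) = (Y * nil_jordan_mat lam) $$ (part_pos lam i l, part_pos lam j t)"
    using Suc.prems j by (simp add: mult_nil_jordan_mat_index[OF Y] part_pos_less)
  also have "\<dots> = (if 0 < l then Y $$ (part_pos lam i (l - 1), part_pos lam j t) else 0)"
    using Suc.prems j by (simp add: commute nil_jordan_mat_mult_index[OF Y] part_pos_less)
  also have "\<dots> = (if Suc t \<le> l then Y $$ (part_pos lam i (l - Suc t), part_pos lam j 0) else 0)"
    using Suc.prems Suc.IH[of "l - 1"] by (cases l) auto
  finally show ?case .
qed simp

lemma nil_jordan_commute_vanish: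
  assumes i: "i < length lam" and j: "j < length lam" "0 < lam ! j" and a: "a < lam ! i - lam ! j"
  shows "Y $$ (part_pos lam i a, part_pos lam j 0) = 0"
proof -
  define l where "l = a + lam ! j"
  have l: "l < lam ! i" "0 < l" "lam ! j - 1 \<le> l - 1" "l - 1 - (lam ! j - 1) = a"
    using a j(2) by (auto simp: l_def)
  have last: "lam ! j - 1 < lam ! j" "\<not> Suc (lam ! j - 1) < lam ! j" using j(2) by auto
  have "0 = (Y * nil_jordan_mat lam) $$ (part_pos lam i l, part_pos lam j (lam ! j - 1))"
    using i j l last by (simp add: mult_nil_jordan_mat_index[OF Y] part_pos_less)
  also have "\<dots> = Y $$ (part_pos lam i (l - 1), part_pos lam j (lam ! j - 1))"
    using i j l last by (simp add: commute nil_jordan_mat_mult_index[OF Y] part_pos_less)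
  also have "\<dots> = Y $$ (part_pos lam i a, part_pos lam j 0)"
    using nil_jordan_commute_index[OF i _ j(1) last(1), of "l - 1"] l by simp
  finally show ?thesis by simp
qed

lemma nil_jordan_commute_imp_toeplitz:
  assumes pos: "\<forall>m\<in>set lam. 0 < m"
  shows "\<exists>M \<in> part_alg_carrier lam. toeplitz_mat lam M = Y"
proof
  let ?s = "length lam"
  define M where "M = mat ?s ?s (\<lambda>(i, j). \<Sum>l<lam ! i. monom (Y $$ (part_pos lam i l, part_pos lam j 0)) l)"
  have coeff_M: "coeff (M $$ (i, j)) l = (if l < lam ! i then Y $$ (part_pos lam i l, part_pos lam j 0) else 0)"
    if "i < ?s" "j < ?s" for i j l
    using that by (simp add: M_def coeff_sum coeff_monom)
  show "M \<in> part_alg_carrier lam"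
    using pos by (auto simp: part_alg_carrier_def monom_1_dvd_iff' coeff_M nil_jordan_commute_vanish)
       (auto simp: M_def)
  show "toeplitz_mat lam M = Y"
  proof (rule eq_mat_part_posI[where lam = lam])
    fix i l j t assume "i < length lam" "l < lam ! i" "j < length lam" "t < lam ! j"
    then show "toeplitz_mat lam M $$ (part_pos lam i l, part_pos lam j t) = Y $$ (part_pos lam i l, part_pos lam j t)"
      using nil_jordan_commute_index[of i l j t] by (simp add: index_toeplitz_mat coeff_M less_imp_diff_less)
  qed (use Y in auto)
qed

end

section \<open>Restriction of scalars along a simple extension\<close>

locale primitive_extension =
  fixes p :: "'a::field poly" and \<phi> :: "'a \<Rightarrow> 'b::field" and \<alpha> :: 'b
  assumes hom: "field_hom \<phi>"
    and monic: "lead_coeff p = 1"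
    and irreducible_p: "irreducible p"
    and root: "poly (map_poly \<phi> p) \<alpha> = 0"
    and generates: "\<forall>y. \<exists>q. y = poly (map_poly \<phi> q) \<alpha>"
begin

sublocale field_hom \<phi> by (rule hom)

interpretation map_poly_hom: map_poly_comm_ring_hom \<phi> by unfold_locales

definition aeval :: "'a poly \<Rightarrow> 'b" where
  "aeval q = poly (map_poly \<phi> q) \<alpha>"

lemma aeval_add [simp]: "aeval (q + r) = aeval q + aeval r"
  and aeval_diff [simp]: "aeval (q - r) = aeval q - aeval r"
  and aeval_mult [simp]: "aeval (q * r) = aeval q * aeval r"
  and aeval_1 [simp]: "aeval 1 = 1"
  and aeval_p [simp]: "aeval p = 0"
  and aeval_0 [simp]: "aeval 0 = 0"
  and aeval_monom [simp]: "aeval (monom c i) = \<phi> c * \<alpha> ^ i"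
  using root by (simp_all add: aeval_def map_poly_hom.hom_add map_poly_hom.hom_minus
      map_poly_hom.hom_mult map_poly_monom poly_monom)

lemma aeval_const [simp]: "aeval [:c:] = \<phi> c"
  using aeval_monom[of c 0] by (simp add: monom_0)

lemma aeval_sum: "aeval (sum f A) = (\<Sum>x\<in>A. aeval (f x))"
  by (induction A rule: infinite_finite_induct) simp_all

lemma aeval_smult [simp]: "aeval (smult c q) = \<phi> c * aeval q"
  by (metis aeval_const aeval_mult mult_smult_left mult_1 smult_one)

lemma degree_p_pos: "0 < degree p"
  using irreducible_p by (auto simp: irreducible_def is_unit_iff_degree)

lemma aeval_eq_0_iff: "aeval q = 0 \<longleftrightarrow> p dvd q"
proof
  assume "aeval q = 0"
  have "p \<noteq> 0" using degree_p_pos by auto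
  then obtain m where m: "m \<noteq> 0" "aeval m = 0"
    and least: "\<And>r. r \<noteq> 0 \<Longrightarrow> aeval r = 0 \<Longrightarrow> degree m \<le> degree r"
    using ex_has_least_nat[of "\<lambda>r. r \<noteq> 0 \<and> aeval r = 0" p degree] by auto
  have m_dvd: "m dvd r" if "aeval r = 0" for r
  proof (rule ccontr)
    assume "\<not> m dvd r"
    then have "r mod m \<noteq> 0" by (simp add: mod_eq_0_iff_dvd)
    moreover have "aeval (r mod m) = 0"
      using that m(2) minus_mod_eq_mult_div[of r m] aeval_diff[of r "r mod m"] by simp
    moreover have "degree (r mod m) < degree m"
      using degree_mod_less'[OF m(1)] \<open>r mod m \<noteq> 0\<close> .
    ultimately show False using least[of "r mod m"] by simp
  qed
  have "\<not> is_unit m"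
  proof
    assume "is_unit m"
    then have "m = [:coeff m 0:]" by (simp add: is_unit_iff_degree[OF m(1)] degree_0_id)
    with m have "\<phi> (coeff m 0) = 0" by (metis aeval_const)
    with m \<open>m = [:coeff m 0:]\<close> show False by simp
  qed
  with m_dvd[of p] irreducible_p have "p dvd m" by (auto simp: irreducible_altdef)
  from this m_dvd[OF \<open>aeval q = 0\<close>] show "p dvd q" by (rule dvd_trans)
next
  assume "p dvd q"
  then obtain r where "q = p * r" by (rule dvdE)
  then show "aeval q = 0" by simp
qed

definition rep :: "'b \<Rightarrow> 'a poly" where
  "rep y = (SOME r. degree r < degree p \<and> aeval r = y)"

lemma rep: "degree (rep y) < degree p" "aeval (rep y) = y"
proof -
  obtain q where q: "aeval q = y" using generates unfolding aeval_def by metis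
  have "p \<noteq> 0" using degree_p_pos by auto
  then have "degree (q mod p) < degree p"
    using degree_mod_less[of p q] degree_p_pos by auto
  moreover have "aeval (q mod p) = y"
    using q minus_mod_eq_mult_div[of q p] aeval_diff[of q "q mod p"] by simp
  ultimately have "\<exists>r. degree r < degree p \<and> aeval r = y" by blast
  from someI_ex[OF this] show "degree (rep y) < degree p" "aeval (rep y) = y"
    unfolding rep_def by simp_all
qed

lemma rep_unique:
  assumes "degree r < degree p" "aeval r = y"
  shows "rep y = r"
proof -
  have "p dvd rep y - r" using rep(2) assms(2) by (simp add: aeval_eq_0_iff[symmetric])
  moreover have "degree (rep y - r) < degree p"
    by (rule le_less_trans[OF degree_diff_le_max]) (use rep(1)[of y] assms(1) in simp)
  ultimately show ?thesis using dvd_imp_degree_le[of p "rep y - r"] by force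
qed

definition coord :: "nat \<Rightarrow> 'b \<Rightarrow> 'a" where
  "coord i y = coeff (rep y) i"

lemma sum_coord: "(\<Sum>i<degree p. \<phi> (coord i y) * \<alpha> ^ i) = y"
proof -
  have "{..degree p - 1} = {..<degree p}" using degree_p_pos by auto
  then have "rep y = (\<Sum>i<degree p. monom (coord i y) i)"
    using poly_as_sum_of_monoms'[of "rep y" "degree p - 1"] rep(1)[of y]
    by (simp add: coord_def)
  then show ?thesis using rep(2)[of y] by (simp add: aeval_sum)
qed

lemma coord_lin_comb:
  assumes "j < degree p"
  shows "coord j (\<Sum>i<degree p. \<phi> (c i) * \<alpha> ^ i) = c j"
proof -
  let ?r = "\<Sum>i<degree p. monom (c i) i"
  have "degree ?r < degree p"
    using degree_p_pos by (intro degree_lessI) (auto simp: coeff_sum coeff_monom)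
  then have "rep (\<Sum>i<degree p. \<phi> (c i) * \<alpha> ^ i) = ?r"
    by (rule rep_unique) (simp add: aeval_sum)
  with assms show ?thesis by (simp add: coord_def coeff_sum coeff_monom)
qed

lemma coord_eqI:
  assumes "\<And>i. i < degree p \<Longrightarrow> coord i y = coord i z"
  shows "y = z"
proof -
  have "(\<Sum>i<degree p. \<phi> (coord i y) * \<alpha> ^ i) = (\<Sum>i<degree p. \<phi> (coord i z) * \<alpha> ^ i)"
    using assms by (intro sum.cong) simp_all
  then show ?thesis by (simp only: sum_coord)
qed

lemma coord_add [simp]: "coord i (y + z) = coord i y + coord i z"
proof -
  have "rep (y + z) = rep y + rep z"
    using rep[of y] rep[of z] degree_add_le_max[of "rep y" "rep z"] by (intro rep_unique) auto
  then show ?thesis by (simp add: coord_def)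
qed

lemma coord_smult [simp]: "coord i (\<phi> c * y) = c * coord i y"
proof -
  have "rep (\<phi> c * y) = smult c (rep y)"
    using rep[of y] degree_smult_le[of c "rep y"] by (intro rep_unique) auto
  then show ?thesis by (simp add: coord_def)
qed

lemma coord_0 [simp]: "coord i 0 = 0"
  using coord_smult[of i 0 0] by simp

lemma coord_sum: "coord i (sum f A) = (\<Sum>x\<in>A. coord i (f x))"
  by (induction A rule: infinite_finite_induct) auto

lemma coord_alpha_pow:
  assumes "i < degree p" "j < degree p"
  shows "coord i (\<alpha> ^ j) = (if i = j then 1 else 0)"
proof -
  have "rep (\<alpha> ^ j) = monom 1 j"
    using assms(2) by (intro rep_unique) (auto simp: degree_monom_eq)
  then show ?thesis by (simp add: coord_def coeff_monom)
qed

lemma coord_alpha_pow_degree: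
  assumes "i < degree p"
  shows "coord i (\<alpha> ^ degree p) = - coeff p i"
proof -
  have "\<forall>k\<ge>degree p. coeff (monom 1 (degree p) - p) k = 0"
    using monic by (auto simp: coeff_monom coeff_eq_0)
  then have "degree (monom 1 (degree p) - p) < degree p"
    using degree_p_pos by (intro degree_lessI) auto
  then have "rep (\<alpha> ^ degree p) = monom 1 (degree p) - p"
    by (rule rep_unique) simp
  then show ?thesis
    using assms by (simp add: coord_def coeff_monom)
qed

lemma companion_mat_coord:
  assumes "i < degree p" "j < degree p"
  shows "companion_mat p $$ (i, j) = coord i (\<alpha> ^ Suc j)"
proof (cases "Suc j < degree p")
  case True
  with assms show ?thesis by (simp add: companion_mat_def coord_alpha_pow del: power_Suc)
next
  case False
  with assms have "Suc j = degree p" by simp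
  with assms False show ?thesis by (simp add: companion_mat_def coord_alpha_pow_degree)
qed

text \<open>Restriction of scalars from \<open>K\<close> to \<open>k\<close>: each entry \<open>y\<close> becomes the matrix of
  multiplication by \<open>y\<close> in the basis \<open>1, \<alpha>, \<dots>, \<alpha>\<^bsup>d-1\<^esup>\<close>.\<close>

definition restrict_mat :: "'b mat \<Rightarrow> 'a mat" where
  "restrict_mat Y = mat (dim_row Y * degree p) (dim_col Y * degree p) (\<lambda>(q, q').
     coord (q mod degree p) (Y $$ (q div degree p, q' div degree p) * \<alpha> ^ (q' mod degree p)))"

lemma restrict_mat_carrier: "Y \<in> carrier_mat m m' \<Longrightarrow> restrict_mat Y \<in> carrier_mat (m * degree p) (m' * degree p)"
  unfolding restrict_mat_def by simp

lemma index_restrict_mat: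
  assumes "Y \<in> carrier_mat m m'" "u < m" "v < m'" "r < degree p" "r' < degree p"
  shows "restrict_mat Y $$ (u * degree p + r, v * degree p + r') = coord r (Y $$ (u, v) * \<alpha> ^ r')"
  using assms mult_add_less[of u m r "degree p"] mult_add_less[of v m' r' "degree p"]
  by (simp add: restrict_mat_def)

definition block_val :: "'a mat \<Rightarrow> nat \<Rightarrow> nat \<Rightarrow> 'b" where
  "block_val B u c = (\<Sum>r<degree p. \<phi> (B $$ (u * degree p + r, c)) * \<alpha> ^ r)"

lemma coord_block_val: "r < degree p \<Longrightarrow> coord r (block_val B u c) = B $$ (u * degree p + r, c)"
  unfolding block_val_def by (rule coord_lin_comb)

lemma eq_mat_block_valI:
  assumes "A \<in> carrier_mat (m * degree p) n" "B \<in> carrier_mat (m * degree p) n"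
    and "\<And>u c. u < m \<Longrightarrow> c < n \<Longrightarrow> block_val A u c = block_val B u c"
  shows "A = B"
proof (rule eq_matI)
  fix q c assume "q < dim_row B" "c < dim_col B"
  with assms(2) have "q < m * degree p" "c < n" by auto
  then show "A $$ (q, c) = B $$ (q, c)"
    by (elim less_mult_cases) (metis assms(3) coord_block_val)
qed (use assms in auto)

lemma block_val_restrict_mat:
  assumes "Y \<in> carrier_mat m m'" "u < m" "v < m'" "r < degree p"
  shows "block_val (restrict_mat Y) u (v * degree p + r) = Y $$ (u, v) * \<alpha> ^ r"
  using assms by (simp add: block_val_def index_restrict_mat sum_coord)

lemma block_val_restrict_mat_mult:
  assumes Y: "Y \<in> carrier_mat m m'" and B: "B \<in> carrier_mat (m' * degree p) n" and "u < m" "c < n"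
  shows "block_val (restrict_mat Y * B) u c = (\<Sum>v<m'. Y $$ (u, v) * block_val B v c)"
proof (rule coord_eqI)
  fix r assume r: "r < degree p"
  have "coord r (block_val (restrict_mat Y * B) u c) = (restrict_mat Y * B) $$ (u * degree p + r, c)"
    using r by (rule coord_block_val)
  also have "\<dots> = (\<Sum>w<m' * degree p. restrict_mat Y $$ (u * degree p + r, w) * B $$ (w, c))"
    by (rule index_mult_mat_sum[OF restrict_mat_carrier[OF Y] B]) (use assms r in \<open>auto intro: mult_add_less\<close>)
  also have "\<dots> = (\<Sum>v<m'. \<Sum>s<degree p. B $$ (v * degree p + s, c) * coord r (Y $$ (u, v) * \<alpha> ^ s))"
    using assms r by (simp add: sum_lessThan_mult index_restrict_mat mult.commute)
  also have "\<dots> = coord r (\<Sum>v<m'. Y $$ (u, v) * block_val B v c)"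
  proof -
    have "coord r (y * (\<phi> b * z)) = b * coord r (y * z)" for y b z
      by (metis coord_smult mult.left_commute)
    then show ?thesis by (simp add: block_val_def sum_distrib_left coord_sum)
  qed
  finally show "coord r (block_val (restrict_mat Y * B) u c) = coord r (\<Sum>v<m'. Y $$ (u, v) * block_val B v c)" .
qed

lemma restrict_mat_mult:
  assumes Y: "Y \<in> carrier_mat m m'" and Z: "Z \<in> carrier_mat m' m''"
  shows "restrict_mat (Y * Z) = restrict_mat Y * restrict_mat Z"
proof (rule eq_mat_block_valI)
  fix u c assume u: "u < m" and "c < m'' * degree p"
  then obtain v r where v: "v < m''" "r < degree p" and c: "c = v * degree p + r"
    by (elim less_mult_cases)
  have "block_val (restrict_mat Y * restrict_mat Z) u c = (\<Sum>w<m'. Y $$ (u, w) * (Z $$ (w, v) * \<alpha> ^ r))"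
    using Y Z u v c by (simp add: block_val_restrict_mat_mult[OF Y restrict_mat_carrier[OF Z]]
        block_val_restrict_mat mult_add_less)
  also have "\<dots> = block_val (restrict_mat (Y * Z)) u c"
    using Y Z u v c by (simp add: block_val_restrict_mat[of _ m m''] index_mult_mat_sum[OF Y Z]
        sum_distrib_right mult.assoc del: index_mult_mat)
  finally show "block_val (restrict_mat (Y * Z)) u c = block_val (restrict_mat Y * restrict_mat Z) u c" ..
qed (use restrict_mat_carrier[OF Y] restrict_mat_carrier[OF Z] restrict_mat_carrier[OF mult_carrier_mat[OF Y Z]]
    in auto)

lemma restrict_mat_add:
  assumes "Y \<in> carrier_mat m m'" "Z \<in> carrier_mat m m'"
  shows "restrict_mat (Y + Z) = restrict_mat Y + restrict_mat Z"
proof (rule eq_matI)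
  fix q c assume "q < dim_row (restrict_mat Y + restrict_mat Z)" "c < dim_col (restrict_mat Y + restrict_mat Z)"
  with assms have "q < m * degree p" "c < m' * degree p" by (auto simp: restrict_mat_def)
  then show "restrict_mat (Y + Z) $$ (q, c) = (restrict_mat Y + restrict_mat Z) $$ (q, c)"
    using assms by (elim less_mult_cases) (simp add: index_restrict_mat mult_add_less distrib_right
        restrict_mat_def)
qed (use assms in \<open>auto simp: restrict_mat_def\<close>)

lemma restrict_mat_smult_one: "restrict_mat (\<phi> c \<cdot>\<^sub>m 1\<^sub>m m) = c \<cdot>\<^sub>m 1\<^sub>m (m * degree p)"
proof (rule eq_matI)
  fix q q' assume "q < dim_row (c \<cdot>\<^sub>m 1\<^sub>m (m * degree p))" "q' < dim_col (c \<cdot>\<^sub>m 1\<^sub>m (m * degree p))"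
  then have "q < m * degree p" "q' < m * degree p" by auto
  then show "restrict_mat (\<phi> c \<cdot>\<^sub>m 1\<^sub>m m) $$ (q, q') = (c \<cdot>\<^sub>m 1\<^sub>m (m * degree p)) $$ (q, q')"
    by (elim less_mult_cases)
       (auto simp: index_restrict_mat[of _ m m] mult_add_less mult_add_inject coord_alpha_pow)
qed (auto simp: restrict_mat_def)

lemma restrict_mat_one: "restrict_mat (1\<^sub>m m) = 1\<^sub>m (m * degree p)"
proof (rule eq_matI)
  fix q q' assume "q < dim_row (1\<^sub>m (m * degree p) :: 'a mat)" "q' < dim_col (1\<^sub>m (m * degree p) :: 'a mat)"
  then have "q < m * degree p" "q' < m * degree p" by auto
  then show "restrict_mat (1\<^sub>m m) $$ (q, q') = 1\<^sub>m (m * degree p) $$ (q, q')"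
    by (elim less_mult_cases)
       (auto simp: index_restrict_mat[of _ m m] mult_add_less mult_add_inject coord_alpha_pow)
qed (auto simp: restrict_mat_def)

lemma restrict_mat_zero: "restrict_mat (0\<^sub>m m m') = 0\<^sub>m (m * degree p) (m' * degree p)"
proof (rule eq_matI)
  fix q q' assume "q < dim_row (0\<^sub>m (m * degree p) (m' * degree p) :: 'a mat)"
    "q' < dim_col (0\<^sub>m (m * degree p) (m' * degree p) :: 'a mat)"
  then have "q < m * degree p" "q' < m' * degree p" by auto
  then show "restrict_mat (0\<^sub>m m m') $$ (q, q') = 0\<^sub>m (m * degree p) (m' * degree p) $$ (q, q')"
    by (elim less_mult_cases) (simp add: index_restrict_mat[of _ m m'] mult_add_less)
qed (auto simp: restrict_mat_def)

lemma restrict_mat_inject: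
  assumes "Y \<in> carrier_mat m m'" "Z \<in> carrier_mat m m'" "restrict_mat Y = restrict_mat Z"
  shows "Y = Z"
proof (rule eq_matI)
  fix u v assume "u < dim_row Z" "v < dim_col Z"
  with assms(2) have "u < m" "v < m'" by auto
  with assms degree_p_pos show "Y $$ (u, v) = Z $$ (u, v)"
    using block_val_restrict_mat[of Y m m' u v 0] block_val_restrict_mat[of Z m m' u v 0] by simp
qed (use assms in auto)

lemma mult_restrict_alpha_index:
  assumes B: "B \<in> carrier_mat n (m * degree p)" and "q < n" "v < m" "Suc r < degree p"
  shows "(B * restrict_mat (\<alpha> \<cdot>\<^sub>m 1\<^sub>m m)) $$ (q, v * degree p + r) = B $$ (q, v * degree p + Suc r)"
proof -
  let ?D = "restrict_mat (\<alpha> \<cdot>\<^sub>m 1\<^sub>m m)"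
  have D: "?D \<in> carrier_mat (m * degree p) (m * degree p)" by (simp add: restrict_mat_carrier)
  have "(B * ?D) $$ (q, v * degree p + r) = (\<Sum>v'<m. \<Sum>s<degree p. B $$ (q, v' * degree p + s) *
      ?D $$ (v' * degree p + s, v * degree p + r))"
    using assms by (simp add: index_mult_mat_sum[OF B D] mult_add_less sum_lessThan_mult del: index_mult_mat)
  also have "\<dots> = (\<Sum>v'<m. \<Sum>s<degree p. if v' = v \<and> s = Suc r then B $$ (q, v' * degree p + s) else 0)"
    using assms by (intro sum.cong refl)
      (auto simp: index_restrict_mat[of _ m m] coord_alpha_pow power_Suc[symmetric] simp del: power_Suc)
  finally show ?thesis using assms by (simp add: sum_sum_delta)
qed

lemma restrict_alpha_commute_imp_restrict:
  assumes B: "B \<in> carrier_mat (m * degree p) (m * degree p)"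
    and commute: "B * restrict_mat (\<alpha> \<cdot>\<^sub>m 1\<^sub>m m) = restrict_mat (\<alpha> \<cdot>\<^sub>m 1\<^sub>m m) * B"
  shows "\<exists>Y \<in> carrier_mat m m. restrict_mat Y = B"
proof
  let ?D = "restrict_mat (\<alpha> \<cdot>\<^sub>m 1\<^sub>m m)"
  have D: "?D \<in> carrier_mat (m * degree p) (m * degree p)" by (simp add: restrict_mat_carrier)
  have mult_alpha: "block_val (?D * B) u c = \<alpha> * block_val B u c" if "u < m" "c < m * degree p" for u c
  proof -
    have "block_val (?D * B) u c = (\<Sum>v<m. (\<alpha> \<cdot>\<^sub>m 1\<^sub>m m) $$ (u, v) * block_val B v c)"
      using that by (intro block_val_restrict_mat_mult[OF _ B]) auto
    also have "\<dots> = (\<Sum>v<m. if v = u then \<alpha> * block_val B v c else 0)"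
      using that by (intro sum.cong) auto
    finally show ?thesis using that by simp
  qed
  have powers: "block_val B u (v * degree p + r) = \<alpha> ^ r * block_val B u (v * degree p)"
    if u: "u < m" and v: "v < m" and r: "r < degree p" for u v r
    using r
  proof (induction r)
    case (Suc r)
    have "block_val B u (v * degree p + Suc r) = block_val (B * ?D) u (v * degree p + r)"
      using Suc.prems u v by (simp add: block_val_def mult_add_less mult_restrict_alpha_index[OF B])
    also have "\<dots> = \<alpha> * block_val B u (v * degree p + r)"
      using Suc.prems u v by (simp add: commute mult_alpha mult_add_less)
    finally show ?case using Suc by simp
  qed simp
  define Y where "Y = mat m m (\<lambda>(u, v). block_val B u (v * degree p))"
  show "Y \<in> carrier_mat m m" by (simp add: Y_def)
  show "restrict_mat Y = B"
  proof (rule eq_mat_block_valI)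
    fix u c assume "u < m" "c < m * degree p"
    then show "block_val (restrict_mat Y) u c = block_val B u c"
      by (elim less_mult_cases) (simp add: block_val_restrict_mat[of _ m m] Y_def powers mult.commute)
  qed (use B in \<open>auto simp: Y_def restrict_mat_carrier\<close>)
qed

end

section \<open>Lifting \<open>\<alpha>\<close> to \<open>K[x]\<close> by Newton iteration\<close>

lemma pcompose_taylor:
  fixes P :: "'c::idom poly"
  shows "(z - [:a:]) ^ 2 dvd P \<circ>\<^sub>p z - [:poly P a:] - (z - [:a:]) * [:poly (pderiv P) a:]"
proof (induction P)
  case (pCons c P)
  let ?e = "z - [:a:]"
  from pCons.IH obtain h where
    "P \<circ>\<^sub>p z - [:poly P a:] - ?e * [:poly (pderiv P) a:] = ?e ^ 2 * h" by (elim dvdE)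
  then have P: "P \<circ>\<^sub>p z = [:poly P a:] + ?e * [:poly (pderiv P) a:] + ?e ^ 2 * h"
    by (simp add: algebra_simps)
  have z_split: "z * X = ([:a:] + ?e) * X" for X by simp
  have constants: "[:poly (pCons c P) a:] = [:c:] + [:a:] * [:poly P a:]"
    "[:poly (pderiv (pCons c P)) a:] = [:poly P a:] + [:a:] * [:poly (pderiv P) a:]"
    by (simp_all add: pderiv_pCons)
  have ring_identity: "C + (A + e) * (Pa + e * Q + e ^ 2 * h) - (C + A * Pa) - e * (Pa + A * Q) =
      e ^ 2 * (A * h + Q + e * h)" for C A Pa Q e :: "'c poly"
    by (simp add: algebra_simps power2_eq_square)
  have "pCons c P \<circ>\<^sub>p z - [:poly (pCons c P) a:] - ?e * [:poly (pderiv (pCons c P)) a:] =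
      ?e ^ 2 * ([:a:] * h + [:poly (pderiv P) a:] + ?e * h)"
    unfolding pcompose_pCons P z_split constants by (rule ring_identity)
  then show ?case by (rule dvdI)
qed simp

lemma newton_step:
  fixes P B :: "'c::idom poly"
  assumes root: "poly P a = 0" and inverse: "poly (pderiv P) a * poly B a = 1"
  shows "(z - [:a:]) ^ 2 dvd z - (P \<circ>\<^sub>p z) * (B \<circ>\<^sub>p z) - [:a:]"
proof -
  let ?e = "z - [:a:]" and ?A = "[:poly (pderiv P) a:]" and ?C = "[:poly B a:]"
  have expand: "X = C + e * (Q + e * h)" if "X - C - e * Q = e ^ 2 * h" for X C e Q h :: "'c poly"
    using that by (simp add: algebra_simps power2_eq_square)
  obtain h where "P \<circ>\<^sub>p z - [:poly P a:] - ?e * ?A = ?e ^ 2 * h"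
    using pcompose_taylor[of z a P] by (elim dvdE)
  with root have P: "P \<circ>\<^sub>p z = ?e * (?A + ?e * h)" using expand by fastforce
  obtain h' where "B \<circ>\<^sub>p z - ?C - ?e * [:poly (pderiv B) a:] = ?e ^ 2 * h'"
    using pcompose_taylor[of z a B] by (elim dvdE)
  then obtain w where B: "B \<circ>\<^sub>p z = ?C + ?e * w" using expand by blast
  have AC: "?A * ?C = 1" using inverse by (simp add: one_pCons mult.commute)
  have ring_identity: "(c + e) - e * (A + e * h) * (C + e * w) - c = e ^ 2 * - (A * w + h * C + e * h * w)"
    if "A * C = 1" for c e A C h w :: "'c poly"
  proof -
    have "(c + e) - e * (A + e * h) * (C + e * w) - c = e - e * (A * C) - e ^ 2 * (A * w + h * C + e * h * w)"
      by (simp add: algebra_simps power2_eq_square)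
    with that show ?thesis by (simp add: algebra_simps)
  qed
  have "z - (P \<circ>\<^sub>p z) * (B \<circ>\<^sub>p z) - [:a:] = ([:a:] + ?e) - ?e * (?A + ?e * h) * (?C + ?e * w) - [:a:]"
    unfolding P B by simp
  also have "\<dots> = ?e ^ 2 * - (?A * w + h * ?C + ?e * h * w)"
    using AC by (rule ring_identity)
  finally show ?thesis by (rule dvdI)
qed

locale separable_primitive_extension = primitive_extension +
  assumes separable: "separable_poly p"
begin

lemma aeval_pderiv_invertible: "\<exists>b. aeval b * aeval (pderiv p) = 1"
proof -
  have "aeval (pderiv p) \<noteq> 0"
  proof
    assume "aeval (pderiv p) = 0"
    then have "p dvd pderiv p" by (simp add: aeval_eq_0_iff)
    with separable have "is_unit p"
      unfolding separable_poly_def by (metis coprime_common_divisor dvd_refl)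
    with irreducible_p show False using irreducible_not_unit by blast
  qed
  moreover obtain b where "inverse (aeval (pderiv p)) = aeval b"
    using generates unfolding aeval_def by metis
  ultimately show ?thesis by (metis left_inverse)
qed

context
  fixes S :: "'b poly set"
  assumes const: "\<And>c. [:\<phi> c:] \<in> S"
    and add: "\<And>z w. z \<in> S \<Longrightarrow> w \<in> S \<Longrightarrow> z + w \<in> S"
    and mult: "\<And>z w. z \<in> S \<Longrightarrow> w \<in> S \<Longrightarrow> z * w \<in> S"
begin

lemma diff_closed: "z \<in> S \<Longrightarrow> w \<in> S \<Longrightarrow> z - w \<in> S"
  using add[OF _ mult[OF const[of "-1"]], of z w] by (simp add: hom_distribs)

lemma pcompose_map_poly_closed: "z \<in> S \<Longrightarrow> map_poly \<phi> g \<circ>\<^sub>p z \<in> S"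
proof (induction g)
  case 0
  then show ?case using const[of 0] by simp
next
  case (pCons c g)
  then show ?case by (simp add: map_poly_pCons pcompose_pCons add mult const)
qed

text \<open>Newton's iteration \<open>z \<mapsto> z - p(z) b(z)\<close>, where \<open>b(\<alpha>) p'(\<alpha>) = 1\<close>,
  doubles the \<open>x\<close>-adic precision of an approximation of the constant \<open>\<alpha>\<close>
  without leaving \<open>S\<close>.\<close>

lemma hensel_lift:
  assumes x_plus_alpha: "[:\<alpha>, 1:] \<in> S"
  shows "\<exists>z\<in>S. monom 1 (Suc k) dvd z - [:\<alpha>:]"
proof (induction k)
  case 0
  have "[:\<alpha>, 1:] - [:\<alpha>:] = monom 1 (Suc 0)" by (simp add: monom_Suc)
  with x_plus_alpha show ?case by (metis dvd_refl)
next
  case (Suc k)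
  obtain b where b: "aeval b * aeval (pderiv p) = 1" using aeval_pderiv_invertible by blast
  let ?P = "map_poly \<phi> p" and ?B = "map_poly \<phi> b"
  from Suc obtain z where z: "z \<in> S" "monom 1 (Suc k) dvd z - [:\<alpha>:]" by blast
  have "monom 1 (Suc (Suc k)) dvd monom 1 (Suc k + Suc k)" by (rule monom_1_dvd_monom_1) simp
  also have "\<dots> dvd (z - [:\<alpha>:]) ^ 2"
    using mult_dvd_mono[OF z(2) z(2)] by (simp add: mult_monom power2_eq_square)
  also have "\<dots> dvd z - (?P \<circ>\<^sub>p z) * (?B \<circ>\<^sub>p z) - [:\<alpha>:]"
    using root b by (intro newton_step) (simp_all add: aeval_def map_poly_pderiv[symmetric] mult.commute)
  finally show ?case
    using z(1) by (intro bexI[of _ "z - (?P \<circ>\<^sub>p z) * (?B \<circ>\<^sub>p z)"])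
      (auto intro: diff_closed mult pcompose_map_poly_closed)
qed

end

end

section \<open>The centralizer of \<open>J\<^sub>\<lambda>(C\<^sub>p)\<close>\<close>

locale jordan_centralizer = separable_primitive_extension +
  fixes lam :: "nat list"
  assumes parts_pos: "\<forall>m\<in>set lam. 0 < m"
begin

abbreviation scalar :: "'b poly \<Rightarrow> 'b poly mat" where
  "scalar z \<equiv> z \<cdot>\<^sub>m 1\<^sub>m (length lam)"

abbreviation J :: "'a mat" where
  "J \<equiv> jordan_mat lam (companion_mat p)"

definition cent_hom :: "'b poly mat \<Rightarrow> 'a mat" where
  "cent_hom M = restrict_mat (toeplitz_mat lam M)"

lemma cent_hom_carrier [simp]: "cent_hom M \<in> carrier_mat (sum_list lam * degree p) (sum_list lam * degree p)"
  by (simp add: cent_hom_def restrict_mat_carrier)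

lemma J_carrier: "J \<in> carrier_mat (sum_list lam * degree p) (sum_list lam * degree p)"
  using jordan_mat_carrier[of lam "companion_mat p"] by (simp add: companion_mat_def)

lemma cent_hom_mult:
  "M \<in> part_alg_carrier lam \<Longrightarrow> M' \<in> part_alg_carrier lam \<Longrightarrow>
    cent_hom (M * M') = cent_hom M * cent_hom M'"
  by (simp add: cent_hom_def toeplitz_mat_mult restrict_mat_mult[OF toeplitz_mat_carrier toeplitz_mat_carrier])

lemma cent_hom_add:
  "M \<in> carrier_mat (length lam) (length lam) \<Longrightarrow> M' \<in> carrier_mat (length lam) (length lam) \<Longrightarrow>
    cent_hom (M + M') = cent_hom M + cent_hom M'"
  by (simp add: cent_hom_def toeplitz_mat_add restrict_mat_add[OF toeplitz_mat_carrier toeplitz_mat_carrier])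

lemma cent_hom_one: "cent_hom (1\<^sub>m (length lam)) = 1\<^sub>m (sum_list lam * degree p)"
  by (simp add: cent_hom_def toeplitz_mat_one restrict_mat_one)

lemma cent_hom_const: "cent_hom (scalar [:\<phi> c:]) = c \<cdot>\<^sub>m 1\<^sub>m (sum_list lam * degree p)"
  by (simp add: cent_hom_def toeplitz_mat_const restrict_mat_smult_one)

lemma cent_hom_eq_0_iff:
  assumes "M \<in> carrier_mat (length lam) (length lam)"
  shows "cent_hom M = 0\<^sub>m (sum_list lam * degree p) (sum_list lam * degree p) \<longleftrightarrow>
    (\<forall>i<length lam. \<forall>j<length lam. monom 1 (lam ! i) dvd M $$ (i, j))"
  unfolding toeplitz_mat_eq_0_iff[OF parts_pos assms, symmetric] cent_hom_def
  using restrict_mat_inject[of "toeplitz_mat lam M" "sum_list lam" "sum_list lam" "0\<^sub>m _ _"]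
  by (auto simp: restrict_mat_zero)

lemma index_cent_hom_scalar:
  assumes "i < length lam" "l < lam ! i" "r < degree p" "j < length lam" "l' < lam ! j" "r' < degree p"
  shows "cent_hom (scalar z) $$ (part_pos lam i l * degree p + r, part_pos lam j l' * degree p + r') =
    (if i = j \<and> l' \<le> l then coord r (coeff z (l - l') * \<alpha> ^ r') else 0)"
  using assms by (simp add: cent_hom_def index_restrict_mat[OF toeplitz_mat_carrier] part_pos_less
      index_toeplitz_mat_smult_one)

lemma J_eq_cent_hom: "J = cent_hom (scalar [:\<alpha>, 1:])"
proof (rule eq_mat_part_pos_blockI[OF J_carrier cent_hom_carrier])
  fix i l r j l' r'
  assume i: "i < length lam" "l < lam ! i" "r < degree p" and j: "j < length lam" "l' < lam ! j" "r' < degree p"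
  have C: "companion_mat p \<in> carrier_mat (degree p) (degree p)" by (simp add: companion_mat_def)
  consider "l = l'" | "l = Suc l'" | "l \<noteq> l'" "l \<noteq> Suc l'" by blast
  then show "J $$ (part_pos lam i l * degree p + r, part_pos lam j l' * degree p + r') =
    cent_hom (scalar [:\<alpha>, 1:]) $$ (part_pos lam i l * degree p + r, part_pos lam j l' * degree p + r')"
  proof cases
    case 1
    with i j show ?thesis
      by (simp add: index_jordan_mat[OF C] index_cent_hom_scalar companion_mat_coord)
  next
    case 2
    with i j show ?thesis
      by (simp add: index_jordan_mat[OF C] index_cent_hom_scalar coord_alpha_pow)
  next
    case 3
    then have "coeff [:\<alpha>, 1:] (l - l') = 0" if "l' \<le> l"
      using that by (cases "l - l'") (auto simp: coeff_pCons split: nat.split)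
    with 3 i j show ?thesis
      by (simp add: index_jordan_mat[OF C] index_cent_hom_scalar)
  qed
qed

lemma scalar_add: "scalar (z + w) = scalar z + scalar w"
  by (rule add_smult_distrib_right_mat[OF one_carrier_mat])

lemma scalar_mult: "scalar (z * w) = scalar z * scalar w"
  by (rule eq_matI) (auto simp: mult_smult_assoc_mat mult_smult_distrib)

lemma cent_hom_commute_J: "M \<in> part_alg_carrier lam \<Longrightarrow> cent_hom M * J = J * cent_hom M"
  unfolding J_eq_cent_hom
  by (simp add: cent_hom_mult[symmetric] smult_one_mat_in_part_alg_carrier smult_one_mat_commute
      part_alg_carrierD)

lemma carrier_centralizer_ring_J:
  "carrier (centralizer_ring J) =
    {B \<in> carrier_mat (sum_list lam * degree p) (sum_list lam * degree p). B * J = J * B}"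
  using J_carrier by (simp add: centralizer_ring_def)

lemma cent_hom_ring_hom: "cent_hom \<in> ring_hom (part_alg lam) (centralizer_ring J)"
proof (rule ring_hom_memI)
  fix M M' :: "'b poly mat" assume "M \<in> carrier (part_alg lam)" "M' \<in> carrier (part_alg lam)"
  then have M: "M \<in> part_alg_carrier lam" and M': "M' \<in> part_alg_carrier lam" by (simp_all add: part_alg_def)
  show "cent_hom M \<in> carrier (centralizer_ring J)"
    using cent_hom_commute_J[OF M] by (simp add: carrier_centralizer_ring_J)
  show "cent_hom (M \<otimes>\<^bsub>part_alg lam\<^esub> M') = cent_hom M \<otimes>\<^bsub>centralizer_ring J\<^esub> cent_hom M'"
    using cent_hom_mult[OF M M'] by (simp add: part_alg_def centralizer_ring_def)
  show "cent_hom (M \<oplus>\<^bsub>part_alg lam\<^esub> M') = cent_hom M \<oplus>\<^bsub>centralizer_ring J\<^esub> cent_hom M'"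
    using cent_hom_add M M' by (simp add: part_alg_def centralizer_ring_def part_alg_carrierD)
next
  show "cent_hom \<one>\<^bsub>part_alg lam\<^esub> = \<one>\<^bsub>centralizer_ring J\<^esub>"
    using cent_hom_one J_carrier by (simp add: part_alg_def centralizer_ring_def)
qed

lemma cent_hom_kernel: "a_kernel (part_alg lam) (centralizer_ring J) cent_hom = part_ideal lam"
  using J_carrier
  by (auto simp: a_kernel_def' part_alg_def centralizer_ring_def part_ideal_def cent_hom_eq_0_iff
      part_alg_carrierD)

lemma cent_hom_scalar_cong:
  assumes "sum_list lam \<le> N" "monom 1 N dvd z - w"
  shows "cent_hom (scalar z) = cent_hom (scalar w)"
proof -
  have "monom 1 (lam ! i) dvd z - w" if "i < length lam" for i
  proof -
    from that assms(1) have "lam ! i \<le> N" using member_le_sum_list[of "lam ! i" lam] by simp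
    then have "monom 1 (lam ! i) dvd monom (1::'b) N" by (rule monom_1_dvd_monom_1)
    from this assms(2) show ?thesis by (rule dvd_trans)
  qed
  then have "cent_hom (scalar (z - w)) = 0\<^sub>m (sum_list lam * degree p) (sum_list lam * degree p)"
    by (simp add: cent_hom_eq_0_iff)
  moreover have "scalar z = scalar w + scalar (z - w)"
    unfolding scalar_add[symmetric] by simp
  ultimately show ?thesis by (simp add: cent_hom_add)
qed

context
  fixes B :: "'a mat"
  assumes B: "B \<in> carrier_mat (sum_list lam * degree p) (sum_list lam * degree p)"
    and commute: "B * J = J * B"
begin

lemma commute_J_imp_commute_scalars:
  "cent_hom (scalar [:\<alpha>:]) * B = B * cent_hom (scalar [:\<alpha>:])"
  "cent_hom (scalar [:0, 1:]) * B = B * cent_hom (scalar [:0, 1:])"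
proof -
  define S where "S = {z. cent_hom (scalar z) * B = B * cent_hom (scalar z)}"
  have const: "[:\<phi> c:] \<in> S" for c
    using smult_one_mat_commute[OF B] by (simp add: S_def cent_hom_const)
  have add: "z + w \<in> S" if "z \<in> S" "w \<in> S" for z w
  proof -
    have "cent_hom (scalar (z + w)) = cent_hom (scalar z) + cent_hom (scalar w)"
      by (simp add: scalar_add cent_hom_add)
    with that show ?thesis
      unfolding S_def using commute_add_mat[OF cent_hom_carrier cent_hom_carrier B] by simp
  qed
  have mult: "z * w \<in> S" if "z \<in> S" "w \<in> S" for z w
  proof -
    have "cent_hom (scalar (z * w)) = cent_hom (scalar z) * cent_hom (scalar w)"
      by (simp add: scalar_mult cent_hom_mult smult_one_mat_in_part_alg_carrier)
    with that show ?thesis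
      unfolding S_def using commute_mult_mat[OF cent_hom_carrier cent_hom_carrier B] by simp
  qed
  have x_plus_alpha: "[:\<alpha>, 1:] \<in> S" using commute by (simp add: S_def J_eq_cent_hom)
  then obtain z where "z \<in> S" and "monom 1 (Suc (sum_list lam)) dvd z - [:\<alpha>:]"
    using hensel_lift[OF const add mult] by blast
  then have "cent_hom (scalar z) = cent_hom (scalar [:\<alpha>:])"
    by (intro cent_hom_scalar_cong[of "Suc (sum_list lam)"]) simp_all
  with \<open>z \<in> S\<close> have alpha: "[:\<alpha>:] \<in> S" by (simp add: S_def)
  then show "cent_hom (scalar [:\<alpha>:]) * B = B * cent_hom (scalar [:\<alpha>:])" by (simp add: S_def)
  have "[:\<alpha>, 1:] - [:\<alpha>:] \<in> S" by (rule diff_closed[OF const add mult x_plus_alpha alpha])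
  then show "cent_hom (scalar [:0, 1:]) * B = B * cent_hom (scalar [:0, 1:])" by (simp add: S_def)
qed

lemma commute_J_imp_cent_hom: "\<exists>M \<in> part_alg_carrier lam. cent_hom M = B"
proof -
  have alpha: "cent_hom (scalar [:\<alpha>:]) = restrict_mat (\<alpha> \<cdot>\<^sub>m 1\<^sub>m (sum_list lam))"
    by (simp add: cent_hom_def toeplitz_mat_const)
  obtain Y where Y: "Y \<in> carrier_mat (sum_list lam) (sum_list lam)" and BY: "restrict_mat Y = B"
    using restrict_alpha_commute_imp_restrict[OF B] commute_J_imp_commute_scalars(1) by (auto simp: alpha)
  have x: "cent_hom (scalar [:0, 1:]) = restrict_mat (nil_jordan_mat lam)"
    by (simp add: cent_hom_def nil_jordan_mat_def)
  have "restrict_mat (Y * nil_jordan_mat lam) = restrict_mat (nil_jordan_mat lam * Y)"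
    using commute_J_imp_commute_scalars(2) Y BY
    by (simp add: x restrict_mat_mult[OF Y nil_jordan_mat_carrier] restrict_mat_mult[OF nil_jordan_mat_carrier Y])
  then have "Y * nil_jordan_mat lam = nil_jordan_mat lam * Y"
    by (rule restrict_mat_inject[OF mult_carrier_mat[OF Y nil_jordan_mat_carrier]
          mult_carrier_mat[OF nil_jordan_mat_carrier Y]])
  then obtain M where "M \<in> part_alg_carrier lam" "toeplitz_mat lam M = Y"
    using nil_jordan_commute_imp_toeplitz[OF Y _ parts_pos] by blast
  with BY show ?thesis by (auto simp: cent_hom_def)
qed

end

lemma cent_hom_surj: "cent_hom ` carrier (part_alg lam) = carrier (centralizer_ring J)"
proof
  show "cent_hom ` carrier (part_alg lam) \<subseteq> carrier (centralizer_ring J)"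
    using ring_hom_closed[OF cent_hom_ring_hom] by blast
  show "carrier (centralizer_ring J) \<subseteq> cent_hom ` carrier (part_alg lam)"
    using commute_J_imp_cent_hom by (force simp: carrier_centralizer_ring_J part_alg_def)
qed

theorem centralizer_iso:
  "\<exists>h. h \<in> ring_iso (trunc_poly_alg lam) (centralizer_ring J) \<and>
    (\<forall>c. h (part_ideal lam +>\<^bsub>part_alg lam\<^esub> scalar [:\<phi> c:]) =
      c \<cdot>\<^sub>m 1\<^sub>m (sum_list lam * degree p))"
proof (intro exI conjI allI)
  have hom: "ring_hom_ring (part_alg lam) (centralizer_ring J) cent_hom"
    by (rule ring_hom_ringI2[OF ring_part_alg ring_centralizer_ring[OF J_carrier] cent_hom_ring_hom])
  show "(\<lambda>X. the_elem (cent_hom ` X)) \<in> ring_iso (trunc_poly_alg lam) (centralizer_ring J)"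
    using ring_hom_ring.FactRing_iso_set[OF hom cent_hom_surj]
    unfolding trunc_poly_alg_def cent_hom_kernel .
  fix c
  have "scalar [:\<phi> c:] \<in> carrier (part_alg lam)"
    by (simp add: part_alg_def smult_one_mat_in_part_alg_carrier)
  then show "the_elem (cent_hom ` (part_ideal lam +>\<^bsub>part_alg lam\<^esub> scalar [:\<phi> c:])) =
      c \<cdot>\<^sub>m 1\<^sub>m (sum_list lam * degree p)"
    using ring_hom_ring.the_elem_simp[OF hom] by (simp add: cent_hom_kernel cent_hom_const)
qed

end

theorem mainTheorem4:
  fixes p :: "'a::field poly" and \<phi> :: "'a \<Rightarrow> 'b::field" and \<alpha> :: 'b
    and lam :: "nat list" and n :: nat
  assumes hom: "field_hom \<phi>"
    and monic: "lead_coeff p = 1"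
    and irr: "irreducible p"
    and sep: "separable_poly p"
    and root: "poly (map_poly \<phi> p) \<alpha> = 0"
    and gen: "\<forall>y::'b. \<exists>q::'a poly. y = poly (map_poly \<phi> q) \<alpha>"
    and part: "is_partition lam n"
  shows "\<exists>h. h \<in> ring_iso (trunc_poly_alg lam)
                (centralizer_ring (jordan_mat lam (companion_mat p)))
           \<and> (\<forall>c::'a. h (part_ideal lam +>\<^bsub>part_alg lam\<^esub>
                          ([:\<phi> c:] \<cdot>\<^sub>m 1\<^sub>m (length lam)))
                     = c \<cdot>\<^sub>m 1\<^sub>m (n * degree p))"
proof -
  from part have "\<forall>m\<in>set lam. 0 < m" and n: "sum_list lam = n"
    by (simp_all add: is_partition_def)
  with assms interpret jordan_centralizer p \<phi> \<alpha> lam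
    by (simp add: jordan_centralizer_def jordan_centralizer_axioms_def separable_primitive_extension_def
        separable_primitive_extension_axioms_def primitive_extension_def)
  from centralizer_iso show ?thesis unfolding n .
qed

end
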